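(* Let $V$ be an $n$-dimensional real inner product space, $r\ge0$, and $\omega$ a $k$-form on $V$ with $|\omega|^{\natural_r}<\infty$. Then $|\star\omega|^{\natural_r}=|\omega|^{\natural_r}$.
   Context: For a simple $k$-vector $\alpha=w_1\wedge\dots\wedge w_k$, $M(\alpha)=\sqrt{\det\langle w_i,w_j\rangle}$. For a simple $k$-vector $\alpha$, $\perp\alpha$ is the simple $(n-k)$-vector with $M(\perp\alpha)=M(\alpha)$ whose $(n-k)$-dimensional subspace is the orthogonal complement of the span of $\alpha$, oriented so that $\alpha\wedge\perp\alpha$ is a positive multiple of $e_1\wedge\dots\wedge e_n$ for a fixed oriented orthonormal basis; $\perp$ is extended linearly. A monopolar $k$-chain is a finite formal sum $\sum_i(p_i;\alpha_i)$, linear in the second slot at each point; $\perp(p;\alpha)=(p;\perp\alpha)$. $T_u(p;\alpha)=(p+u;\alpha)$, $\Delta_u=T_u-\mathrm{id}$, $\Delta^j_U=\Delta_{u_1}\circ\dots\circ\Delta_{u_j}$, $\|\Delta^j_U(p;\alpha)\|_j=|u_1|\cdots|u_j|M(\alpha)$. A $k$-form is a linear functional $\omega$ on monopolar $k$-chains; $\|\omega\|_0=\sup\{|\omega(p;\alpha)|:\alpha$ simple, $M(\alpha)=1\}$, $\|\omega\|_j=\sup\{|\omega(\Delta^j_U(p;\alpha))|:\|\Delta^j_U(p;\alpha)\|_j=1\}$, $|\omega|^{\natural_r}=\max_{0\le j\le r}\|\omega\|_j$. The Hodge star of a $k$-form is the $(n-k)$-form $\star\omega(p;\alpha)=\omega(p;\perp\alpha)$.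 *)

theory Defs
  imports "HOL-Analysis.Analysis"
begin

definition natdet :: "nat \<Rightarrow> (nat \<Rightarrow> nat \<Rightarrow> real) \<Rightarrow> real" where
  "natdet m A = (\<Sum>p | p permutes {..<m}. of_int (sign p) * (\<Prod>i<m. A i (p i)))"

text \<open>A tuple w 0, ..., w (m-1) of vectors represents the simple m-vector w0 wedge ... wedge w(m-1).
  A general simple m-vector is c times such a wedge (needed for m = 0, where simple 0-vectors are scalars).\<close>
definition gram :: "nat \<Rightarrow> (nat \<Rightarrow> 'a::real_inner) \<Rightarrow> real" where
  "gram m w = natdet m (\<lambda>i j. w i \<bullet> w j)"

definition mass :: "nat \<Rightarrow> (nat \<Rightarrow> 'a::real_inner) \<Rightarrow> real" where
  "mass m w = sqrt (gram m w)"

definition orthonormal_frame :: "nat \<Rightarrow> (nat \<Rightarrow> 'a::real_inner) \<Rightarrow> bool" where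
  "orthonormal_frame m e \<longleftrightarrow> (\<forall>i<m. \<forall>j<m. e i \<bullet> e j = (if i = j then 1 else 0))"

definition tuple_append :: "nat \<Rightarrow> (nat \<Rightarrow> 'a) \<Rightarrow> (nat \<Rightarrow> 'a) \<Rightarrow> nat \<Rightarrow> 'a" where
  "tuple_append m v y = (\<lambda>i. if i < m then v i else y (i - m))"

text \<open>Coefficient of v0 wedge ... wedge v(n-1) with respect to e0 wedge ... wedge e(n-1),
  for the fixed oriented orthonormal basis e.\<close>
definition orient :: "(nat \<Rightarrow> 'a::euclidean_space) \<Rightarrow> (nat \<Rightarrow> 'a) \<Rightarrow> real" where
  "orient e v = natdet DIM('a) (\<lambda>i j. v i \<bullet> e j)"

text \<open>perp of the simple m-vector v0 wedge ... wedge v(m-1): the simple (n-m)-vector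
  s * y0 wedge ... wedge y(n-m-1), where y is an orthonormal frame of the orthogonal complement,
  abs s = M(v), and v wedge perp v is a positive multiple of e0 wedge ... wedge e(n-1).
  perp 0 = 0.\<close>
definition perp :: "(nat \<Rightarrow> 'a::euclidean_space) \<Rightarrow> nat \<Rightarrow> (nat \<Rightarrow> 'a) \<Rightarrow> real \<times> (nat \<Rightarrow> 'a)" where
  "perp e m v = (if gram m v = 0 then (0, (\<lambda>_. 0)) else
     (SOME (s, y). orthonormal_frame (DIM('a) - m) y \<and> (\<forall>j. DIM('a) - m \<le> j \<longrightarrow> y j = 0) \<and>
        (\<forall>i<m. \<forall>j<DIM('a) - m. v i \<bullet> y j = 0) \<and> \<bar>s\<bar> = mass m v \<and>
        s * orient e (tuple_append m v y) > 0))"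

text \<open>Linear functionals on the k-th exterior power correspond to alternating k-linear maps.\<close>
definition is_kcovector :: "nat \<Rightarrow> ((nat \<Rightarrow> 'a::real_vector) \<Rightarrow> real) \<Rightarrow> bool" where
  "is_kcovector k f \<longleftrightarrow>
     (\<forall>w w'. (\<forall>i<k. w i = w' i) \<longrightarrow> f w = f w') \<and>
     (\<forall>w. \<forall>i<k. linear (\<lambda>x. f (w(i := x)))) \<and>
     (\<forall>w i j. i < k \<and> j < k \<and> i \<noteq> j \<and> w i = w j \<longrightarrow> f w = 0)"

text \<open>A k-form (linear functional on monopolar k-chains): omega p w = omega(p; w0 wedge ... wedge w(k-1)).\<close>
definition is_kform :: "nat \<Rightarrow> ('a::real_vector \<Rightarrow> (nat \<Rightarrow> 'a) \<Rightarrow> real) \<Rightarrow> bool" where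
  "is_kform k \<omega> \<longleftrightarrow> (\<forall>p. is_kcovector k (\<omega> p))"

definition hodge :: "(nat \<Rightarrow> 'a::euclidean_space) \<Rightarrow> nat \<Rightarrow> ('a \<Rightarrow> (nat \<Rightarrow> 'a) \<Rightarrow> real)
    \<Rightarrow> ('a \<Rightarrow> (nat \<Rightarrow> 'a) \<Rightarrow> real)" where
  "hodge e k \<omega> = (\<lambda>p v. case perp e (DIM('a) - k) v of (s, y) \<Rightarrow> s * \<omega> p y)"

text \<open>omega(Delta^j_U (p; c * w)), using Delta^j_U = sum over S of (-1)^(j-|S|) T_(sum_S u).\<close>
definition diff_eval :: "('a::real_vector \<Rightarrow> (nat \<Rightarrow> 'a) \<Rightarrow> real) \<Rightarrow> nat \<Rightarrow> (nat \<Rightarrow> 'a) \<Rightarrow> 'a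
    \<Rightarrow> real \<Rightarrow> (nat \<Rightarrow> 'a) \<Rightarrow> real" where
  "diff_eval \<omega> j u p c w = c * (\<Sum>S\<in>Pow {..<j}. (-1) ^ (j - card S) * \<omega> (p + (\<Sum>i\<in>S. u i)) w)"

definition form_norm0 :: "nat \<Rightarrow> ('a::real_inner \<Rightarrow> (nat \<Rightarrow> 'a) \<Rightarrow> real) \<Rightarrow> ereal" where
  "form_norm0 k \<omega> = (SUP (p, c, w) \<in> {(p, c, w). \<bar>c\<bar> * mass k w = 1}. ereal \<bar>c * \<omega> p w\<bar>)"

definition form_normj :: "nat \<Rightarrow> nat \<Rightarrow> ('a::real_inner \<Rightarrow> (nat \<Rightarrow> 'a) \<Rightarrow> real) \<Rightarrow> ereal" where
  "form_normj k j \<omega> = (SUP (p, c, w, u) \<in> {(p, c, w, u). (\<Prod>i<j. norm (u i)) * (\<bar>c\<bar> * mass k w) = 1}.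
       ereal \<bar>diff_eval \<omega> j u p c w\<bar>)"

definition nat_norm :: "nat \<Rightarrow> nat \<Rightarrow> ('a::real_inner \<Rightarrow> (nat \<Rightarrow> 'a) \<Rightarrow> real) \<Rightarrow> ereal" where
  "nat_norm k r \<omega> = Max ((\<lambda>j. if j = 0 then form_norm0 k \<omega> else form_normj k j \<omega>) ` {..r})"

end

theory Submission
  imports Defs "Jordan_Normal_Form.Determinant"
begin

(* Each norm ||omega||_j is a supremum over chains of unit mass, so it suffices to match simple
   vectors on the two sides, up to factors of the right absolute value.  For a simple (n-k)-vector v,
   star omega (p; v) = s * omega (p; y) where y is an orthonormal frame of the orthogonal complement
   of v and |s| = M(v).  Conversely, for a simple k-vector w let v be an orthonormal frame of its
   complement: then perp v = s * y with |s| = 1 and y an orthonormal frame of span w, and writing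
   w = A y gives omega (p; w) = det A * omega (p; y) = +-det A * star omega (p; v) with
   |det A| = M(w).  The difference operators Delta_U only move base points, so the matching works
   for every j at once. *)

no_notation scalar_prod (infix \<open>\<bullet>\<close> 70)

section \<open>Gram determinants\<close>

lemma natdet_eq_det: "natdet m A = det (mat m m (\<lambda>(i, j). A i j))"
  unfolding natdet_def det_def by (simp add: atLeast0LessThan)

lemma natdet_one: "natdet m (\<lambda>i j. if i = j then 1 else 0) = 1"
proof -
  have "mat m m (\<lambda>(i, j). if i = j then (1::real) else 0) = 1\<^sub>m m"
    by (rule eq_matI) auto
  then show ?thesis by (simp add: natdet_eq_det)
qed

lemma gram_orthonormal_frame:
  assumes "orthonormal_frame m y"
  shows "gram m y = 1"
proof -
  have "gram m y = natdet m (\<lambda>i j. if i = j then 1 else 0)"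
    using assms unfolding gram_def natdet_def orthonormal_frame_def
    by (intro sum.cong refl arg_cong[where f = "\<lambda>x. _ * x"] prod.cong)
      (metis lessThan_iff permutes_in_image mem_Collect_eq)
  then show ?thesis by (simp add: natdet_one)
qed

lemma gram_eq_0_iff:
  fixes v :: "nat \<Rightarrow> 'a::real_inner"
  shows "gram m v = 0 \<longleftrightarrow> (\<exists>x. (\<Sum>i<m. x i *\<^sub>R v i) = 0 \<and> (\<exists>i<m. x i \<noteq> 0))"
proof -
  let ?G = "mat m m (\<lambda>(i, j). v i \<bullet> v j)"
  have G: "(?G *\<^sub>v x) $ l = v l \<bullet> (\<Sum>j<m. (x $ j) *\<^sub>R v j)"
    if "x \<in> carrier_vec m" and "l < m" for x l
    using that by (simp add: scalar_prod_def atLeast0LessThan inner_sum_right mult.commute)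
  have "gram m v = 0 \<longleftrightarrow> (\<exists>x. x \<in> carrier_vec m \<and> x \<noteq> 0\<^sub>v m \<and> ?G *\<^sub>v x = 0\<^sub>v m)"
    unfolding gram_def natdet_eq_det by (rule det_0_iff_vec_prod_zero) simp
  also have "\<dots> \<longleftrightarrow> (\<exists>x. (\<Sum>i<m. x i *\<^sub>R v i) = 0 \<and> (\<exists>i<m. x i \<noteq> 0))"
  proof
    assume "\<exists>x. x \<in> carrier_vec m \<and> x \<noteq> 0\<^sub>v m \<and> ?G *\<^sub>v x = 0\<^sub>v m"
    then obtain x where x: "x \<in> carrier_vec m" "x \<noteq> 0\<^sub>v m" "?G *\<^sub>v x = 0\<^sub>v m" by blast
    define z where "z = (\<Sum>j<m. (x $ j) *\<^sub>R v j)"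
    \<comment> \<open>the quadratic form of the Gram matrix at \<open>x\<close> is \<open>\<parallel>z\<parallel>\<^sup>2\<close>\<close>
    have "z \<bullet> z = (\<Sum>l<m. x $ l * (?G *\<^sub>v x) $ l)"
      using G[OF x(1)] by (simp add: z_def inner_sum_left)
    then have "z = 0" using x(1,3) by simp
    moreover obtain i where "i < m" "x $ i \<noteq> 0" using x(1,2) by (metis eq_vecI carrier_vecD index_zero_vec)
    ultimately show "\<exists>x. (\<Sum>i<m. x i *\<^sub>R v i) = 0 \<and> (\<exists>i<m. x i \<noteq> 0)"
      unfolding z_def by blast
  next
    assume "\<exists>x. (\<Sum>i<m. x i *\<^sub>R v i) = 0 \<and> (\<exists>i<m. x i \<noteq> 0)"
    then obtain x i where x: "(\<Sum>i<m. x i *\<^sub>R v i) = 0" and i: "i < m" "x i \<noteq> 0" by blast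
    have "?G *\<^sub>v vec m x = 0\<^sub>v m"
      using G[of "vec m x"] x by (intro eq_vecI) simp_all
    moreover have "vec m x \<noteq> 0\<^sub>v m" using i by (metis index_vec index_zero_vec)
    ultimately show "\<exists>x. x \<in> carrier_vec m \<and> x \<noteq> 0\<^sub>v m \<and> ?G *\<^sub>v x = 0\<^sub>v m"
      by (intro exI[of _ "vec m x"]) simp
  qed
  finally show ?thesis .
qed

lemma inj_on_if_gram_neq_0:
  fixes v :: "nat \<Rightarrow> 'a::real_inner"
  assumes "gram m v \<noteq> 0"
  shows "inj_on v {..<m}"
proof (rule inj_onI, rule ccontr)
  fix i j assume i: "i \<in> {..<m}" and j: "j \<in> {..<m}" and "v i = v j" and "i \<noteq> j"
  define x where "x l = (if l = i then 1 else 0) - (if l = j then 1 else (0::real))" for l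
  have terms: "(\<lambda>l. x l *\<^sub>R v l) = (\<lambda>l. (if l = i then v i else 0) - (if l = j then v j else 0))"
    by (auto simp: x_def fun_eq_iff scaleR_left_diff_distrib)
  have "(\<Sum>l<m. x l *\<^sub>R v l) = (\<Sum>l<m. if l = i then v i else 0) - (\<Sum>l<m. if l = j then v j else 0)"
    unfolding terms by (rule sum_subtractf)
  also have "\<dots> = 0" using i j \<open>v i = v j\<close> by simp
  finally have "x i = 0"
    using assms i unfolding gram_eq_0_iff by blast
  with \<open>i \<noteq> j\<close> show False by (simp add: x_def)
qed

lemma independent_if_gram_neq_0:
  fixes v :: "nat \<Rightarrow> 'a::real_inner"
  assumes g: "gram m v \<noteq> 0"
  shows "independent (v ` {..<m})"
proof
  assume "dependent (v ` {..<m})"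
  then obtain u where u: "\<exists>w\<in>v ` {..<m}. u w \<noteq> 0" and s: "(\<Sum>w\<in>v ` {..<m}. u w *\<^sub>R w) = 0"
    using dependent_finite[of "v ` {..<m}"] by auto
  have "(\<Sum>i<m. u (v i) *\<^sub>R v i) = 0"
    using s by (simp add: sum.reindex[OF inj_on_if_gram_neq_0[OF g]])
  with g u show False by (auto simp: gram_eq_0_iff)
qed

lemma gram_lincomb_orthonormal_frame:
  fixes y w :: "nat \<Rightarrow> 'a::real_inner"
  assumes y: "orthonormal_frame k y" and w: "\<forall>i<k. w i = (\<Sum>j<k. A i j *\<^sub>R y j)"
  shows "gram k w = (natdet k A)\<^sup>2"
proof -
  have inner: "w i \<bullet> w l = (\<Sum>t<k. A i t * A l t)" if "i < k" "l < k" for i l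
  proof -
    have "w i \<bullet> w l = (\<Sum>j'<k. \<Sum>j<k. A i j * A l j' * (y j \<bullet> y j'))"
      using w that
      by (simp add: inner_sum_left inner_sum_right sum_distrib_left mult.assoc mult.left_commute)
    also have "\<dots> = (\<Sum>j'<k. \<Sum>j<k. if j = j' then A i j * A l j' else 0)"
      using y by (intro sum.cong refl) (auto simp: orthonormal_frame_def)
    finally show ?thesis by simp
  qed
  let ?M = "mat k k (\<lambda>(i, j). A i j)"
  have M: "?M \<in> carrier_mat k k" by simp
  have "mat k k (\<lambda>(i, j). w i \<bullet> w j) = ?M * transpose_mat ?M"
    by (rule eq_matI) (auto simp: inner scalar_prod_def atLeast0LessThan)
  then have "gram k w = det ?M * det (transpose_mat ?M)"
    by (simp add: gram_def natdet_eq_det det_mult[OF M])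
  then show ?thesis
    by (simp add: det_transpose[OF M] natdet_eq_det power2_eq_square)
qed

lemma gram_pos_if_mass_scaled_eq_1:
  assumes "0 \<le> a" and "a * mass m w = 1"
  shows "0 < gram m w"
proof -
  have "0 < mass m w"
  proof (rule ccontr)
    assume "\<not> 0 < mass m w"
    then have "a * mass m w \<le> 0" using assms(1) by (simp add: mult_nonneg_nonpos)
    with assms(2) show False by simp
  qed
  then show ?thesis by (simp add: mass_def)
qed

section \<open>Orthonormal frames and the complement operator\<close>

lemma orthonormal_frame_sum_inner:
  fixes y :: "nat \<Rightarrow> 'a::real_inner"
  assumes "orthonormal_frame l y" and "i < l"
  shows "(\<Sum>j<l. c j *\<^sub>R y j) \<bullet> y i = c i"
proof -
  have "(\<Sum>j<l. c j *\<^sub>R y j) \<bullet> y i = (\<Sum>j<l. if j = i then c j else 0)"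
    unfolding inner_sum_left using assms
    by (intro sum.cong) (auto simp: orthonormal_frame_def)
  then show ?thesis using assms(2) by simp
qed

lemma orthonormal_frame_DIM_orthogonal_eq_0:
  fixes f :: "nat \<Rightarrow> 'a::euclidean_space"
  assumes f: "orthonormal_frame DIM('a) f" and z: "\<forall>i<DIM('a). z \<bullet> f i = 0"
  shows "z = 0"
proof -
  let ?F = "f ` {..<DIM('a)}"
  have unit: "f i \<bullet> f i = 1" if "i < DIM('a)" for i
    using f that by (simp add: orthonormal_frame_def)
  have "inj_on f {..<DIM('a)}"
  proof (rule inj_onI, rule ccontr)
    fix i j assume i: "i \<in> {..<DIM('a)}" and j: "j \<in> {..<DIM('a)}" and "f i = f j" "i \<noteq> j"
    have "f i \<bullet> f j = 0" using f i j \<open>i \<noteq> j\<close> unfolding orthonormal_frame_def by simp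
    with \<open>f i = f j\<close> unit[of i] i show False by auto
  qed
  then have card: "card ?F = DIM('a)" by (simp add: card_image)
  have "pairwise real_inner_class.orthogonal ?F"
    unfolding pairwise_def real_inner_class.orthogonal_def
    using f by (auto simp: orthonormal_frame_def)
  moreover have "0 \<notin> ?F"
  proof
    assume "0 \<in> ?F"
    then obtain i where "i < DIM('a)" and "f i = 0" by auto
    with unit show False by fastforce
  qed
  ultimately have "independent ?F" by (rule pairwise_orthogonal_independent)
  have "UNIV \<subseteq> span ?F"
    by (rule card_ge_dim_independent) (use \<open>independent ?F\<close> card in auto)
  then have "z \<in> span ?F" by auto
  then have "real_inner_class.orthogonal z z"
    by (rule orthogonal_to_span) (use z in \<open>auto simp: real_inner_class.orthogonal_def\<close>)
  then show ?thesis by (simp add: real_inner_class.orthogonal_def)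
qed

lemma orthonormal_frame_DIM_expansion:
  fixes e :: "nat \<Rightarrow> 'a::euclidean_space"
  assumes e: "orthonormal_frame DIM('a) e"
  shows "z = (\<Sum>j<DIM('a). (z \<bullet> e j) *\<^sub>R e j)"
proof -
  have "z - (\<Sum>j<DIM('a). (z \<bullet> e j) *\<^sub>R e j) = 0"
  proof (rule orthonormal_frame_DIM_orthogonal_eq_0[OF e], intro allI impI)
    fix i assume "i < DIM('a)"
    then show "(z - (\<Sum>j<DIM('a). (z \<bullet> e j) *\<^sub>R e j)) \<bullet> e i = 0"
      by (simp add: inner_diff_left orthonormal_frame_sum_inner[OF e])
  qed
  then show ?thesis by simp
qed

lemma orthonormal_frame_tuple_append:
  assumes "orthonormal_frame m v" and "orthonormal_frame l y"
    and "\<forall>i<m. \<forall>j<l. v i \<bullet> y j = 0"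
  shows "orthonormal_frame (m + l) (tuple_append m v y)"
  using assms by (auto simp: orthonormal_frame_def tuple_append_def inner_commute)

lemma orthonormal_complement_expansion:
  fixes v y :: "nat \<Rightarrow> 'a::euclidean_space"
  assumes v: "orthonormal_frame m v" and y: "orthonormal_frame l y" and ml: "m + l = DIM('a)"
    and vy: "\<forall>i<m. \<forall>j<l. v i \<bullet> y j = 0" and zv: "\<forall>i<m. z \<bullet> v i = 0"
  shows "z = (\<Sum>j<l. (z \<bullet> y j) *\<^sub>R y j)"
proof -
  let ?u = "tuple_append m v y"
  have u: "orthonormal_frame DIM('a) ?u"
    using orthonormal_frame_tuple_append[OF v y vy] ml by simp
  have "(z - (\<Sum>j<l. (z \<bullet> y j) *\<^sub>R y j)) \<bullet> ?u i = 0" if "i < DIM('a)" for i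
  proof (cases "i < m")
    case True
    then have "(\<Sum>j<l. (z \<bullet> y j) *\<^sub>R y j) \<bullet> v i = 0"
      using vy by (simp add: inner_sum_left inner_commute[of "y _" "v i"])
    then show ?thesis using True zv by (simp add: tuple_append_def inner_diff_left)
  next
    case False
    then show ?thesis
      using that ml by (simp add: tuple_append_def inner_diff_left orthonormal_frame_sum_inner[OF y])
  qed
  then have "z - (\<Sum>j<l. (z \<bullet> y j) *\<^sub>R y j) = 0"
    by (intro orthonormal_frame_DIM_orthogonal_eq_0[OF u]) blast
  then show ?thesis by simp
qed

lemma orthonormal_complement_frame_exists:
  fixes v :: "nat \<Rightarrow> 'a::euclidean_space"
  assumes g: "gram m v \<noteq> 0" and m: "m \<le> DIM('a)"
  obtains y where "orthonormal_frame (DIM('a) - m) y" and "\<forall>j. DIM('a) - m \<le> j \<longrightarrow> y j = 0"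
    and "\<forall>i<m. \<forall>j<DIM('a) - m. v i \<bullet> y j = 0"
proof -
  let ?S = "v ` {..<m}"
  let ?W = "{z. \<forall>x\<in>span ?S. real_inner_class.orthogonal x z}"
  have "dim ?W + dim (span ?S) = DIM('a)"
    using dim_subspace_orthogonal_to_vectors[of "span ?S" UNIV] by simp
  moreover have "dim (span ?S) = m"
    using independent_if_gram_neq_0[OF g] inj_on_if_gram_neq_0[OF g]
    by (simp add: dim_span dim_eq_card_independent card_image)
  ultimately have dW: "dim ?W = DIM('a) - m" by simp
  obtain B where BW: "B \<subseteq> ?W" and po: "pairwise real_inner_class.orthogonal B"
    and unit: "\<And>x. x \<in> B \<Longrightarrow> norm x = 1" and iB: "independent B" and cB: "card B = dim ?W"
    by (rule orthonormal_basis_subspace[OF subspace_orthogonal_to_vectors]) blast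
  obtain h where h: "bij_betw h {..<DIM('a) - m} B"
    using ex_bij_betw_nat_finite[OF independent_imp_finite[OF iB]] cB dW
    by (auto simp: atLeast0LessThan)
  define y where "y j = (if j < DIM('a) - m then h j else 0)" for j
  have hB: "h j \<in> B" if "j < DIM('a) - m" for j
    using h that by (auto simp: bij_betw_def)
  have "orthonormal_frame (DIM('a) - m) y"
    unfolding orthonormal_frame_def
  proof (intro allI impI)
    fix i j assume i: "i < DIM('a) - m" and j: "j < DIM('a) - m"
    show "y i \<bullet> y j = (if i = j then 1 else 0)"
    proof (cases "i = j")
      case True
      then show ?thesis using unit[OF hB[OF i]] i by (simp add: y_def norm_eq_1)
    next
      case False
      then have "h i \<noteq> h j" using h i j by (auto simp: bij_betw_def inj_on_def)
      then show ?thesis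
        using po hB i j False by (auto simp: y_def pairwise_def real_inner_class.orthogonal_def)
    qed
  qed
  moreover have "v i \<bullet> y j = 0" if "i < m" and "j < DIM('a) - m" for i j
    using BW hB[OF that(2)] span_base[of "v i" ?S] that by (auto simp: y_def real_inner_class.orthogonal_def)
  ultimately show ?thesis using that by (simp add: y_def)
qed

lemma orient_squared:
  fixes e u :: "nat \<Rightarrow> 'a::euclidean_space"
  assumes e: "orthonormal_frame DIM('a) e"
  shows "(orient e u)\<^sup>2 = gram DIM('a) u"
  unfolding orient_def
  by (rule gram_lincomb_orthonormal_frame[OF e, symmetric])
    (auto intro: orthonormal_frame_DIM_expansion[OF e])

lemma gram_tuple_append_neq_0:
  fixes v y :: "nat \<Rightarrow> 'a::real_inner"
  assumes v: "gram m v \<noteq> 0" and y: "orthonormal_frame l y"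
    and vy: "\<forall>i<m. \<forall>j<l. v i \<bullet> y j = 0"
  shows "gram (m + l) (tuple_append m v y) \<noteq> 0"
proof
  let ?u = "tuple_append m v y"
  assume "gram (m + l) ?u = 0"
  then obtain x where x: "(\<Sum>i<m + l. x i *\<^sub>R ?u i) = 0" and nz: "\<exists>i<m + l. x i \<noteq> 0"
    by (auto simp: gram_eq_0_iff)
  have uy: "?u i \<bullet> y j = (if i = m + j then 1 else 0)" if "i < m + l" and "j < l" for i j
    using that vy y by (auto simp: tuple_append_def orthonormal_frame_def)
  have high: "x i = 0" if "m \<le> i" and "i < m + l" for i
  proof -
    have "0 = (\<Sum>t<m + l. x t *\<^sub>R ?u t) \<bullet> y (i - m)" by (simp add: x)
    also have "\<dots> = (\<Sum>t<m + l. if t = i then x t else 0)"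
      unfolding inner_sum_left using that by (intro sum.cong) (auto simp: uy)
    finally show ?thesis using that by simp
  qed
  have "(\<Sum>i<m. x i *\<^sub>R v i) = (\<Sum>i<m + l. x i *\<^sub>R ?u i)"
    using high by (intro sum.mono_neutral_cong_left) (auto simp: tuple_append_def)
  with x have "(\<Sum>i<m. x i *\<^sub>R v i) = 0" by simp
  then have "x i = 0" if "i < m" for i
    using v that unfolding gram_eq_0_iff by blast
  with high nz show False by (meson not_le)
qed

lemma perp_props:
  fixes e v :: "nat \<Rightarrow> 'a::euclidean_space"
  assumes e: "orthonormal_frame DIM('a) e" and m: "m \<le> DIM('a)" and g: "0 < gram m v"
    and p: "perp e m v = (s, y)"
  shows "orthonormal_frame (DIM('a) - m) y" and "\<forall>i<m. \<forall>j<DIM('a) - m. v i \<bullet> y j = 0"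
    and "\<bar>s\<bar> = mass m v"
proof -
  let ?P = "\<lambda>(s, y). orthonormal_frame (DIM('a) - m) y \<and> (\<forall>j. DIM('a) - m \<le> j \<longrightarrow> y j = 0) \<and>
      (\<forall>i<m. \<forall>j<DIM('a) - m. v i \<bullet> y j = 0) \<and> \<bar>s\<bar> = mass m v \<and>
      s * orient e (tuple_append m v y) > 0"
  obtain y0 where y0: "orthonormal_frame (DIM('a) - m) y0" "\<forall>j. DIM('a) - m \<le> j \<longrightarrow> y0 j = 0"
    "\<forall>i<m. \<forall>j<DIM('a) - m. v i \<bullet> y0 j = 0"
    using orthonormal_complement_frame_exists[of m v] g m by auto
  let ?o = "orient e (tuple_append m v y0)"
  have "gram (m + (DIM('a) - m)) (tuple_append m v y0) \<noteq> 0"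
    using gram_tuple_append_neq_0[OF _ y0(1,3)] g by simp
  then have "?o \<noteq> 0" using orient_squared[OF e] m by (metis le_add_diff_inverse zero_power2)
  moreover have "0 < mass m v" using g by (simp add: mass_def)
  ultimately have "?P (if 0 < ?o then mass m v else - mass m v, y0)"
    using y0 by (auto simp: mult_pos_neg)
  then have "?P (SOME q. ?P q)" by (rule someI)
  moreover have "perp e m v = (SOME q. ?P q)"
    using g unfolding perp_def by simp
  ultimately have "?P (s, y)" unfolding p by argo
  then show "orthonormal_frame (DIM('a) - m) y" and "\<forall>i<m. \<forall>j<DIM('a) - m. v i \<bullet> y j = 0"
    and "\<bar>s\<bar> = mass m v"
    unfolding prod.case by (blast+)
qed

section \<open>Alternating multilinear forms\<close>

lemma sum_PiE_lessThan_Suc: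
  assumes "finite B"
  shows "(\<Sum>g\<in>{..<Suc l} \<rightarrow>\<^sub>E B. F g) = (\<Sum>j\<in>B. \<Sum>g\<in>{..<l} \<rightarrow>\<^sub>E B. F (g(l := j)))"
proof -
  have "{..<Suc l} \<rightarrow>\<^sub>E B = (\<lambda>(j, g). g(l := j)) ` (B \<times> ({..<l} \<rightarrow>\<^sub>E B))"
    unfolding lessThan_Suc by (rule PiE_insert_eq)
  moreover have "inj_on (\<lambda>(j, g). g(l := j)) (B \<times> ({..<l} \<rightarrow>\<^sub>E B))"
    by (rule inj_combinator) simp
  ultimately show ?thesis
    using assms by (simp add: sum.reindex sum.cartesian_product finite_PiE case_prod_unfold)
qed

lemma sum_PiE_eq_sum_permutes:
  assumes S: "finite S" and F: "\<And>g. g \<in> S \<rightarrow>\<^sub>E S \<Longrightarrow> \<not> inj_on g S \<Longrightarrow> F g = 0"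
  shows "(\<Sum>g\<in>S \<rightarrow>\<^sub>E S. F g) = (\<Sum>p | p permutes S. F (restrict p S))"
proof -
  let ?r = "\<lambda>p. restrict p S"
  have "inj_on ?r {p. p permutes S}"
  proof (rule inj_onI, rule ext)
    fix p q x assume "p \<in> {p. p permutes S}" "q \<in> {p. p permutes S}" "?r p = ?r q"
    then show "p x = q x"
      by (cases "x \<in> S") (metis restrict_apply', simp add: permutes_not_in)
  qed
  moreover have "(\<Sum>g\<in>S \<rightarrow>\<^sub>E S. F g) = sum F (?r ` {p. p permutes S})"
  proof (rule sum.mono_neutral_right)
    show "finite (S \<rightarrow>\<^sub>E S)" using S by (simp add: finite_PiE)
    show "?r ` {p. p permutes S} \<subseteq> S \<rightarrow>\<^sub>E S"
      by (auto simp: permutes_in_image)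
    show "\<forall>g\<in>(S \<rightarrow>\<^sub>E S) - ?r ` {p. p permutes S}. F g = 0"
    proof
      fix g assume g: "g \<in> (S \<rightarrow>\<^sub>E S) - ?r ` {p. p permutes S}"
      show "F g = 0"
      proof (rule F)
        show "g \<in> S \<rightarrow>\<^sub>E S" using g by blast
        show "\<not> inj_on g S"
        proof
          assume inj: "inj_on g S"
          define p where "p x = (if x \<in> S then g x else x)" for x
          have "inj_on p S" using inj by (simp add: p_def inj_on_def)
          moreover have "p ` S \<subseteq> S" using g by (auto simp: p_def)
          ultimately have "bij_betw p S S" using S by (simp add: bij_betw_def endo_inj_surj)
          then have "p permutes S" by (rule bij_imp_permutes) (simp add: p_def)
          moreover have "?r p = g" using g by (auto simp: p_def fun_eq_iff PiE_def extensional_def)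
          ultimately show False using g by blast
        qed
      qed
    qed
  qed
  ultimately show ?thesis by (simp add: sum.reindex)
qed

context
  fixes k :: nat and f :: "(nat \<Rightarrow> 'a::real_vector) \<Rightarrow> real"
  assumes f: "is_kcovector k f"
begin

lemma kcovector_cong: "(\<And>i. i < k \<Longrightarrow> w i = w' i) \<Longrightarrow> f w = f w'"
  using f unfolding is_kcovector_def by blast

lemma kcovector_linear: "i < k \<Longrightarrow> linear (\<lambda>x. f (w(i := x)))"
  using f unfolding is_kcovector_def by blast

lemma kcovector_alternating: "i < k \<Longrightarrow> j < k \<Longrightarrow> i \<noteq> j \<Longrightarrow> w i = w j \<Longrightarrow> f w = 0"
  using f unfolding is_kcovector_def by blast

lemma kcovector_add: "i < k \<Longrightarrow> f (w(i := x + y)) = f (w(i := x)) + f (w(i := y))"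
  using linear_add[OF kcovector_linear] by blast

lemma kcovector_lincomb_slot:
  assumes "i < k"
  shows "f (w(i := (\<Sum>j\<in>J. c j *\<^sub>R z j))) = (\<Sum>j\<in>J. c j * f (w(i := z j)))"
  by (simp add: linear_sum[OF kcovector_linear[OF assms]] linear_scale[OF kcovector_linear[OF assms]])

lemma kcovector_swap:
  assumes a: "a < k" and b: "b < k" and ab: "a \<noteq> b"
  shows "f (y \<circ> Transposition.transpose a b) = - f y"
proof -
  define Q where "Q x1 x2 = f (y(a := x1, b := x2))" for x1 x2
  have Qb: "Q x1 (u + v) = Q x1 u + Q x1 v" for x1 u v
    unfolding Q_def using kcovector_add[OF b, of "y(a := x1)"] by simp
  have Qa: "Q (u + v) x2 = Q u x2 + Q v x2" for x2 u v
    unfolding Q_def using kcovector_add[OF a, of "y(b := x2)"] ab by (simp add: fun_upd_twist)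
  have Q0: "Q x x = 0" for x
    unfolding Q_def using ab by (intro kcovector_alternating[OF a b ab]) simp
  have "0 = Q (y a + y b) (y a + y b)" by (simp add: Q0)
  also have "\<dots> = Q (y a) (y a) + Q (y a) (y b) + Q (y b) (y a) + Q (y b) (y b)"
    by (simp add: Qa Qb)
  also have "\<dots> = Q (y a) (y b) + Q (y b) (y a)" by (simp add: Q0)
  finally have "0 = Q (y a) (y b) + Q (y b) (y a)" .
  moreover have "Q (y a) (y b) = f y" unfolding Q_def by simp
  moreover have "Q (y b) (y a) = f (y \<circ> Transposition.transpose a b)"
    unfolding Q_def by (rule arg_cong[where f = f]) (auto simp: fun_eq_iff Transposition.transpose_def)
  ultimately show ?thesis by simp
qed

lemma kcovector_permute:
  assumes p: "p permutes {..<k}"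
  shows "f (y \<circ> p) = of_int (sign p) * f y"
  using p finite_lessThan
proof (induction p arbitrary: y rule: permutes_induct)
  case id
  show ?case by (simp add: sign_id)
next
  case (swap a b p)
  have "permutation p" using swap.hyps(4) permutation_permutes by blast
  then have "sign (Transposition.transpose a b \<circ> p) = - sign p"
    using sign_compose[OF permutation_swap_id \<open>permutation p\<close>] swap.hyps(3)
    by (simp add: sign_swap_id)
  have "f (y \<circ> (Transposition.transpose a b \<circ> p)) = f ((y \<circ> Transposition.transpose a b) \<circ> p)"
    by (simp add: comp_assoc)
  also have "\<dots> = of_int (sign p) * f (y \<circ> Transposition.transpose a b)"
    by (rule swap.IH)
  also have "\<dots> = - of_int (sign p) * f y"
    using kcovector_swap swap.hyps(1-3) by simp
  finally show ?case
    unfolding \<open>sign (Transposition.transpose a b \<circ> p) = - sign p\<close>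
    by (simp only: of_int_minus mult_minus_left)
qed

lemma kcovector_expand:
  assumes "l \<le> k"
  shows "f (\<lambda>i. if i < l then (\<Sum>j<k. A i j *\<^sub>R y j) else z i) =
    (\<Sum>g\<in>{..<l} \<rightarrow>\<^sub>E {..<k}. (\<Prod>i<l. A i (g i)) * f (\<lambda>i. if i < l then y (g i) else z i))"
  using assms
proof (induction l arbitrary: z)
  case 0
  then show ?case by simp
next
  case (Suc l)
  then have l: "l < k" and lk: "l \<le> k" by simp_all
  let ?S = "\<lambda>i. \<Sum>j<k. A i j *\<^sub>R y j"
  let ?w = "\<lambda>g. \<lambda>i. if i < l then y (g i) else z i"
  define z' where "z' = z(l := ?S l)"
  have shift: "(\<lambda>i. if i < Suc l then ?S i else z i) = (\<lambda>i. if i < l then ?S i else z' i)"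
    by (auto simp: fun_eq_iff z'_def)
  have last: "(\<lambda>i. if i < l then y (g i) else z' i) = (?w g)(l := ?S l)" for g
    by (auto simp: fun_eq_iff z'_def)
  have "f (\<lambda>i. if i < Suc l then ?S i else z i)
      = (\<Sum>g\<in>{..<l} \<rightarrow>\<^sub>E {..<k}. (\<Prod>i<l. A i (g i)) * f ((?w g)(l := ?S l)))"
    unfolding shift Suc.IH[OF lk, of z'] last ..
  also have "\<dots> = (\<Sum>g\<in>{..<l} \<rightarrow>\<^sub>E {..<k}. \<Sum>j<k. (\<Prod>i<l. A i (g i)) * A l j * f ((?w g)(l := y j)))"
    by (simp add: kcovector_lincomb_slot[OF l] sum_distrib_left mult.assoc)
  also have "\<dots> = (\<Sum>j<k. \<Sum>g\<in>{..<l} \<rightarrow>\<^sub>E {..<k}. (\<Prod>i<l. A i (g i)) * A l j * f ((?w g)(l := y j)))"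
    by (rule sum.swap)
  also have "\<dots> = (\<Sum>g\<in>{..<Suc l} \<rightarrow>\<^sub>E {..<k}.
      (\<Prod>i<Suc l. A i (g i)) * f (\<lambda>i. if i < Suc l then y (g i) else z i))"
    unfolding sum_PiE_lessThan_Suc[OF finite_lessThan]
  proof (intro sum.cong refl)
    fix j g assume "g \<in> {..<l} \<rightarrow>\<^sub>E {..<k}"
    have "(\<Prod>i<Suc l. A i ((g(l := j)) i)) = (\<Prod>i<l. A i (g i)) * A l j"
      by (simp add: prod.lessThan_Suc)
    moreover have "(\<lambda>i. if i < Suc l then y ((g(l := j)) i) else z i) = (?w g)(l := y j)"
      by (auto simp: fun_eq_iff)
    ultimately show "(\<Prod>i<l. A i (g i)) * A l j * f ((?w g)(l := y j)) =
        (\<Prod>i<Suc l. A i ((g(l := j)) i)) * f (\<lambda>i. if i < Suc l then y ((g(l := j)) i) else z i)"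
      by simp
  qed
  finally show ?case .
qed

lemma kcovector_lincomb:
  assumes w: "\<forall>i<k. w i = (\<Sum>j<k. A i j *\<^sub>R y j)"
  shows "f w = natdet k A * f y"
proof -
  let ?F = "\<lambda>g. (\<Prod>i<k. A i (g i)) * f (\<lambda>i. if i < k then y (g i) else 0)"
  have "f w = f (\<lambda>i. if i < k then (\<Sum>j<k. A i j *\<^sub>R y j) else 0)"
    by (rule kcovector_cong) (simp add: w)
  also have "\<dots> = (\<Sum>g\<in>{..<k} \<rightarrow>\<^sub>E {..<k}. ?F g)"
    by (rule kcovector_expand) simp
  also have "\<dots> = (\<Sum>p | p permutes {..<k}. ?F (restrict p {..<k}))"
  proof (rule sum_PiE_eq_sum_permutes)
    fix g :: "nat \<Rightarrow> nat" assume "\<not> inj_on g {..<k}"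
    then obtain i j where "i < k" "j < k" "i \<noteq> j" "g i = g j"
      unfolding inj_on_def by auto
    then show "?F g = 0" by (simp add: kcovector_alternating)
  qed simp
  also have "\<dots> = (\<Sum>p | p permutes {..<k}. of_int (sign p) * (\<Prod>i<k. A i (p i)) * f y)"
  proof (rule sum.cong[OF refl])
    fix p assume "p \<in> {p. p permutes {..<k}}"
    moreover have "f (\<lambda>i. if i < k then y (restrict p {..<k} i) else 0) = f (y \<circ> p)"
      by (rule kcovector_cong) simp
    ultimately show "?F (restrict p {..<k}) = of_int (sign p) * (\<Prod>i<k. A i (p i)) * f y"
      by (simp add: kcovector_permute)
  qed
  also have "\<dots> = natdet k A * f y"
    by (simp add: natdet_def sum_distrib_right)
  finally show ?thesis .
qed

end

section \<open>Comparing the norms\<close>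

definition represented_on_unit_mass ::
    "nat \<Rightarrow> ('a::real_inner \<Rightarrow> (nat \<Rightarrow> 'a) \<Rightarrow> real) \<Rightarrow> nat \<Rightarrow> ('a \<Rightarrow> (nat \<Rightarrow> 'a) \<Rightarrow> real) \<Rightarrow> bool"
  where "represented_on_unit_mass k \<omega> m \<eta> \<longleftrightarrow>
    (\<forall>w. 0 < gram k w \<longrightarrow>
      (\<exists>v d. mass m v = 1 \<and> \<bar>d\<bar> = mass k w \<and> (\<forall>p. \<omega> p w = d * \<eta> p v)))"

lemma diff_eval_rescale:
  assumes "\<forall>p. \<omega> p w = d * \<eta> p v"
  shows "diff_eval \<omega> j u p c w = diff_eval \<eta> j u p (c * d) v"
  unfolding diff_eval_def using assms
  by (simp add: sum_distrib_left mult.assoc mult.left_commute)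

lemma form_norm0_le_if_represented:
  assumes "represented_on_unit_mass k \<omega> m \<eta>"
  shows "form_norm0 k \<omega> \<le> form_norm0 m \<eta>"
  unfolding form_norm0_def
proof (rule SUP_mono, clarify)
  fix p :: 'a and c :: real and w :: "nat \<Rightarrow> 'a"
  assume h: "\<bar>c\<bar> * mass k w = 1"
  then obtain v d where v: "mass m v = 1" "\<bar>d\<bar> = mass k w" "\<forall>q. \<omega> q w = d * \<eta> q v"
    using assms gram_pos_if_mass_scaled_eq_1[of "\<bar>c\<bar>"]
    unfolding represented_on_unit_mass_def by force
  then have "(p, c * d, v) \<in> {(p, c, w). \<bar>c\<bar> * mass m w = 1}"
    using h by (simp add: abs_mult)
  moreover have "\<bar>c * \<omega> p w\<bar> = \<bar>(c * d) * \<eta> p v\<bar>"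
    using v by (simp add: mult.assoc)
  ultimately show "\<exists>x\<in>{(p, c, w). \<bar>c\<bar> * mass m w = 1}.
      ereal \<bar>c * \<omega> p w\<bar> \<le> (case x of (p, c, w) \<Rightarrow> ereal \<bar>c * \<eta> p w\<bar>)"
    by force
qed

lemma form_normj_le_if_represented:
  assumes "represented_on_unit_mass k \<omega> m \<eta>"
  shows "form_normj k j \<omega> \<le> form_normj m j \<eta>"
  unfolding form_normj_def
proof (rule SUP_mono, clarify)
  fix p :: 'a and c :: real and w u :: "nat \<Rightarrow> 'a"
  assume h: "(\<Prod>i<j. norm (u i)) * (\<bar>c\<bar> * mass k w) = 1"
  then have "(\<Prod>i<j. norm (u i)) * \<bar>c\<bar> * mass k w = 1" by (simp add: mult.assoc)
  then obtain v d where v: "mass m v = 1" "\<bar>d\<bar> = mass k w" "\<forall>q. \<omega> q w = d * \<eta> q v"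
    using assms gram_pos_if_mass_scaled_eq_1[of "(\<Prod>i<j. norm (u i)) * \<bar>c\<bar>"]
    unfolding represented_on_unit_mass_def by (force simp: prod_nonneg)
  then have "(p, c * d, v, u) \<in> {(p, c, w, u). (\<Prod>i<j. norm (u i)) * (\<bar>c\<bar> * mass m w) = 1}"
    using h by (simp add: abs_mult)
  moreover have "diff_eval \<omega> j u p c w = diff_eval \<eta> j u p (c * d) v"
    using v(3) by (rule diff_eval_rescale)
  ultimately show "\<exists>x\<in>{(p, c, w, u). (\<Prod>i<j. norm (u i)) * (\<bar>c\<bar> * mass m w) = 1}.
      ereal \<bar>diff_eval \<omega> j u p c w\<bar> \<le> (case x of (p, c, w, u) \<Rightarrow> ereal \<bar>diff_eval \<eta> j u p c w\<bar>)"
    by force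
qed

lemma nat_norm_le_if_represented:
  assumes "represented_on_unit_mass k \<omega> m \<eta>"
  shows "nat_norm k r \<omega> \<le> nat_norm m r \<eta>"
  unfolding nat_norm_def
proof (rule Max.boundedI)
  let ?N = "\<lambda>j. if j = 0 then form_norm0 m \<eta> else form_normj m j \<eta>"
  fix x assume "x \<in> (\<lambda>j. if j = 0 then form_norm0 k \<omega> else form_normj k j \<omega>) ` {..r}"
  then obtain j where j: "j \<le> r" and x: "x = (if j = 0 then form_norm0 k \<omega> else form_normj k j \<omega>)"
    by blast
  have "x \<le> ?N j"
    using form_norm0_le_if_represented[OF assms] form_normj_le_if_represented[OF assms] x by simp
  also have "\<dots> \<le> Max (?N ` {..r})"
    using j by (intro Max_ge) auto
  finally show "x \<le> Max (?N ` {..r})" .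
qed auto

lemma hodge_represented_by_form:
  fixes e :: "nat \<Rightarrow> 'a::euclidean_space"
  assumes e: "orthonormal_frame DIM('a) e" and k: "k \<le> DIM('a)"
  shows "represented_on_unit_mass (DIM('a) - k) (hodge e k \<omega>) k \<omega>"
  unfolding represented_on_unit_mass_def
proof (intro allI impI)
  fix v :: "nat \<Rightarrow> 'a" assume g: "0 < gram (DIM('a) - k) v"
  obtain s y where p: "perp e (DIM('a) - k) v = (s, y)" by fastforce
  have "orthonormal_frame k y" and s: "\<bar>s\<bar> = mass (DIM('a) - k) v"
    using perp_props[OF e _ g p] k by simp_all
  then have "mass k y = 1" by (simp add: mass_def gram_orthonormal_frame)
  moreover have "\<forall>q. hodge e k \<omega> q v = s * \<omega> q y" by (simp add: hodge_def p)
  ultimately show "\<exists>y s. mass k y = 1 \<and> \<bar>s\<bar> = mass (DIM('a) - k) v \<and> (\<forall>q. hodge e k \<omega> q v = s * \<omega> q y)"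
    using s by blast
qed

lemma form_represented_by_hodge:
  fixes e :: "nat \<Rightarrow> 'a::euclidean_space"
  assumes e: "orthonormal_frame DIM('a) e" and k: "k \<le> DIM('a)" and \<omega>: "is_kform k \<omega>"
  shows "represented_on_unit_mass k \<omega> (DIM('a) - k) (hodge e k \<omega>)"
  unfolding represented_on_unit_mass_def
proof (intro allI impI)
  fix w :: "nat \<Rightarrow> 'a" assume g: "0 < gram k w"
  obtain v where v: "orthonormal_frame (DIM('a) - k) v" and wv: "\<forall>i<k. \<forall>j<DIM('a) - k. w i \<bullet> v j = 0"
    using orthonormal_complement_frame_exists[of k w] g k by (metis less_irrefl)
  have mv: "mass (DIM('a) - k) v = 1" by (simp add: mass_def gram_orthonormal_frame[OF v])
  obtain s y where p: "perp e (DIM('a) - k) v = (s, y)" by fastforce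
  have y: "orthonormal_frame k y" and vy: "\<forall>i<DIM('a) - k. \<forall>j<k. v i \<bullet> y j = 0"
    and s: "\<bar>s\<bar> = 1"
    using perp_props[OF e _ _ p] mv k by (simp_all add: mass_def gram_orthonormal_frame[OF v])
  \<comment> \<open>\<open>y\<close> spans the same space as \<open>w\<close>, and \<open>A\<close> holds the coordinates of \<open>w\<close> in it\<close>
  define A where "A i j = w i \<bullet> y j" for i j
  have wA: "\<forall>i<k. w i = (\<Sum>j<k. A i j *\<^sub>R y j)"
    unfolding A_def using orthonormal_complement_expansion[OF v y _ vy] wv k
    by (simp add: inner_commute)
  have "\<omega> q w = (natdet k A * s) * hodge e k \<omega> q v" for q
  proof -
    have "\<omega> q w = natdet k A * \<omega> q y"
      using \<omega> wA unfolding is_kform_def by (blast intro: kcovector_lincomb)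
    moreover have "s * s = 1" using s by (metis abs_mult_self_eq mult_1_right)
    ultimately show ?thesis by (simp add: hodge_def p mult.assoc)
  qed
  moreover have "\<bar>natdet k A * s\<bar> = mass k w"
    using gram_lincomb_orthonormal_frame[OF y wA] s by (simp add: mass_def abs_mult)
  ultimately show "\<exists>v d. mass (DIM('a) - k) v = 1 \<and> \<bar>d\<bar> = mass k w \<and>
      (\<forall>q. \<omega> q w = d * hodge e k \<omega> q v)"
    using mv by blast
qed

theorem mainTheorem7:
  fixes e :: "nat \<Rightarrow> 'a::euclidean_space" and \<omega> :: "'a \<Rightarrow> (nat \<Rightarrow> 'a) \<Rightarrow> real" and k r :: nat
  assumes "orthonormal_frame DIM('a) e"
    and "k \<le> DIM('a)"
    and "is_kform k \<omega>"
    and "nat_norm k r \<omega> < \<infinity>"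
  shows "nat_norm (DIM('a) - k) r (hodge e k \<omega>) = nat_norm k r \<omega>"
proof (rule antisym)
  show "nat_norm (DIM('a) - k) r (hodge e k \<omega>) \<le> nat_norm k r \<omega>"
    using hodge_represented_by_form[OF assms(1,2)] by (rule nat_norm_le_if_represented)
  show "nat_norm k r \<omega> \<le> nat_norm (DIM('a) - k) r (hodge e k \<omega>)"
    using form_represented_by_hodge[OF assms(1-3)] by (rule nat_norm_le_if_represented)
qed

end
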